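(* Let $(M,\mathrm{d})$ be a metric space, $\mathcal X$ a set, $\mathcal S\subseteq M^{\mathcal X}$, $\tau>0$, and let $\mathcal Z:\mathcal S\to\mathcal P(\mathcal T)$ be a learning problem. Let $\mu$ be a probability measure over $\mathcal S$. Suppose there is a deterministic algorithm $\mathcal A$ that learns $\mathcal Z$ with probability $\beta$ over the instance $s\sim\mu$ from $q$ many $\tau$-accurate evaluation queries. Then for any $f\in M^{\mathcal X}$ it holds $$q\geq\frac{\beta-\sup_{t\in\mathcal T}\Pr_{s\sim\mu}[s\in\mathcal Z_t]}{\max_{x\in\mathcal X}\Pr_{s\sim\mu}\left[\mathrm{d}(s(x),f(x))>\tau\right]}.$$
   Context: A learning problem is a map $\mathcal Z:\mathcal S\to\mathcal P(\mathcal T)$ into the power set of a target set $\mathcal T$; given oracle access to an unknown source $s\in\mathcal S$, the task is to output some $t\in\mathcal Z(s)$. For $t\in\mathcal T$, $\mathcal Z_t=\{s\in\mathcal S: t\in\mathcal Z(s)\}$. For $s\in M^{\mathcal X}$ and $\tau>0$, the evaluation oracle $\mathrm{Eval}_\tau(s)$, when queried with $x\in\mathcal X$, returns some $v\in M$ with $\mathrm{d}(v,s(x))\le\tau$ (any such value may be returned); such a query is a $\tau$-accurate evaluation query. A deterministic algorithm learns $\mathcal Z$ with probability $\beta$ over $s\sim\mu$ from $q$ queries if $\Pr_{s\sim\mu}[\mathcal A$ with access to $\mathrm{Eval}_\tau(s)$ outputs an element of $\mathcal Z(s)$ using at most $q$ queries$]\ge\beta$, where success is required for every valid behaviour of the oracle.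 *)

theory Defs
  imports "HOL-Probability.Probability"
begin

text \<open>A deterministic adaptive query algorithm: given the history of
(query, answer) pairs so far, it either issues a new query or outputs a target.\<close>
datatype ('x, 'v, 't) step = Query 'x | Output 't

type_synonym ('x, 'v, 't) algorithm = "('x \<times> 'v) list \<Rightarrow> ('x, 'v, 't) step"

type_synonym ('x, 'v) responder = "('x \<times> 'v) list \<Rightarrow> 'x \<Rightarrow> 'v"

definition valid_eval_responder :: "real \<Rightarrow> ('x \<Rightarrow> 'm::metric_space) \<Rightarrow> ('x, 'm) responder \<Rightarrow> bool" where
  "valid_eval_responder \<tau> s R \<longleftrightarrow> (\<forall>h x. dist (R h x) (s x) \<le> \<tau>)"

fun run :: "('x, 'v, 't) algorithm \<Rightarrow> ('x, 'v) responder \<Rightarrow> nat \<Rightarrow> ('x \<times> 'v) list \<Rightarrow> 't option" where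
  "run A R 0 h = (case A h of Output t \<Rightarrow> Some t | Query x \<Rightarrow> None)"
| "run A R (Suc n) h = (case A h of Output t \<Rightarrow> Some t | Query x \<Rightarrow> run A R n (h @ [(x, R h x)]))"

definition succeeds :: "('x, 'm::metric_space, 't) algorithm \<Rightarrow> (('x \<Rightarrow> 'm) \<Rightarrow> 't set)
    \<Rightarrow> real \<Rightarrow> nat \<Rightarrow> ('x \<Rightarrow> 'm) \<Rightarrow> bool" where
  "succeeds A Z \<tau> q s \<longleftrightarrow>
     (\<forall>R. valid_eval_responder \<tau> s R \<longrightarrow> (\<exists>t. run A R q [] = Some t \<and> t \<in> Z s))"

definition learns_with_prob :: "('x, 'm::metric_space, 't) algorithm \<Rightarrow> (('x \<Rightarrow> 'm) \<Rightarrow> 't set)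
    \<Rightarrow> real \<Rightarrow> nat \<Rightarrow> ('x \<Rightarrow> 'm) measure \<Rightarrow> real \<Rightarrow> bool" where
  "learns_with_prob A Z \<tau> q \<mu> \<beta> \<longleftrightarrow>
     measure \<mu> {s \<in> space \<mu>. succeeds A Z \<tau> q s} \<ge> \<beta>"

definition Zt :: "(('x \<Rightarrow> 'm) \<Rightarrow> 't set) \<Rightarrow> ('x \<Rightarrow> 'm) measure \<Rightarrow> 't \<Rightarrow> ('x \<Rightarrow> 'm) set" where
  "Zt Z \<mu> t = {s \<in> space \<mu>. t \<in> Z s}"

end

theory Submission
  imports Defs
begin

text \<open>Run the algorithm with the oracle that answers f exactly, as if the source were f itself.
  A source s that is \<tau>-close to f on every query of this run cannot be distinguished from f:
  an oracle for s may answer f x on all of them, so A outputs the same target t and, if it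
  succeeds on s, then s \<in> Z_t. Hence a successful s lies in Z_t or is \<tau>-far from f at one of
  at most q queried points, whence \<beta> \<le> sup_t Pr[s \<in> Z_t] + q \<cdot> max_x Pr[d(s x, f x) > \<tau>].\<close>

fun queries :: "('x, 'v, 't) algorithm \<Rightarrow> ('x, 'v) responder \<Rightarrow> nat \<Rightarrow> ('x \<times> 'v) list \<Rightarrow> 'x list" where
  "queries A R 0 h = []"
| "queries A R (Suc n) h =
     (case A h of Output t \<Rightarrow> [] | Query x \<Rightarrow> x # queries A R n (h @ [(x, R h x)]))"

lemma length_queries_le: "length (queries A R n h) \<le> n"
  by (induction n arbitrary: h) (auto split: step.splits)

lemma run_cong_queries:
  assumes "\<And>h x. x \<in> set (queries A R n h0) \<Longrightarrow> R' h x = R h x"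
  shows "run A R' n h0 = run A R n h0"
  using assms
proof (induction n arbitrary: h0)
  case (Suc n)
  then show ?case
    by (cases "A h0") auto
qed simp

lemma succeeds_imp_output_or_far:
  fixes f s :: "'x \<Rightarrow> 'm::metric_space"
  assumes "\<tau> \<ge> 0" and "succeeds A Z \<tau> q s"
  shows "(\<exists>t. run A (\<lambda>_. f) q [] = Some t \<and> t \<in> Z s)
       \<or> (\<exists>x\<in>set (queries A (\<lambda>_. f) q []). dist (s x) (f x) > \<tau>)"
proof (rule disjCI)
  assume "\<not> (\<exists>x\<in>set (queries A (\<lambda>_. f) q []). dist (s x) (f x) > \<tau>)"
  then have close: "dist (f x) (s x) \<le> \<tau>" if "x \<in> set (queries A (\<lambda>_. f) q [])" for x
    using that by (auto simp: dist_commute not_less)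
  define R :: "('x, 'm) responder"
    where "R = (\<lambda>_ x. if dist (f x) (s x) \<le> \<tau> then f x else s x)"
  have "valid_eval_responder \<tau> s R"
    using \<open>\<tau> \<ge> 0\<close> by (simp add: valid_eval_responder_def R_def)
  with \<open>succeeds A Z \<tau> q s\<close> obtain t where "run A R q [] = Some t" "t \<in> Z s"
    by (auto simp: succeeds_def)
  moreover have "run A R q [] = run A (\<lambda>_. f) q []"
    by (rule run_cong_queries) (simp add: R_def close)
  ultimately show "\<exists>t. run A (\<lambda>_. f) q [] = Some t \<and> t \<in> Z s"
    by auto
qed

context prob_space
begin

lemma bdd_above_range_prob: "bdd_above (range (\<lambda>i. prob (E i)))"
  by (rule bdd_aboveI[where M = 1]) auto

lemma prob_le_SUP: "prob (E i) \<le> (SUP j. prob (E j))"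
  by (rule cSUP_upper[OF UNIV_I bdd_above_range_prob])

lemma prob_UN_le_card_mult_SUP:
  assumes "finite X" and "\<And>x. E x \<in> events"
  shows "prob (\<Union>x\<in>X. E x) \<le> real (card X) * (SUP x. prob (E x))"
proof -
  have "prob (\<Union>x\<in>X. E x) \<le> (\<Sum>x\<in>X. prob (E x))"
    using assms by (intro finite_measure_subadditive_finite) auto
  also have "\<dots> \<le> (\<Sum>x\<in>X. SUP y. prob (E y))"
    by (intro sum_mono prob_le_SUP)
  finally show ?thesis
    by simp
qed

end

lemma prob_succeeds_le:
  fixes M :: "('x \<Rightarrow> 'm::metric_space) measure" and f :: "'x \<Rightarrow> 'm"
    and \<tau> :: real
  defines "E \<equiv> \<lambda>x. {s \<in> space M. dist (s x) (f x) > \<tau>}"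
  assumes "prob_space M" and "\<tau> \<ge> 0"
    and Zt_events: "\<And>t. Zt Z M t \<in> sets M"
    and E_events: "\<And>x. E x \<in> sets M"
  shows "measure M {s \<in> space M. succeeds A Z \<tau> q s}
           \<le> (SUP t. measure M (Zt Z M t)) + real q * (SUP x. measure M (E x))"
proof -
  interpret prob_space M by fact
  define L where "L = queries A (\<lambda>_. f) q []"
  define Good where "Good = (case run A (\<lambda>_. f) q [] of Some t \<Rightarrow> Zt Z M t | None \<Rightarrow> {})"
  have Good_events: "Good \<in> events"
    using Zt_events by (auto simp: Good_def split: option.split)
  have Bad_events: "(\<Union>x\<in>set L. E x) \<in> events"
    using E_events by auto
  have "{s \<in> space M. succeeds A Z \<tau> q s} \<subseteq> Good \<union> (\<Union>x\<in>set L. E x)"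
    using succeeds_imp_output_or_far[OF \<open>\<tau> \<ge> 0\<close>, of A Z q _ f]
    by (fastforce simp: Good_def Zt_def E_def L_def)
  then have "prob {s \<in> space M. succeeds A Z \<tau> q s} \<le> prob (Good \<union> (\<Union>x\<in>set L. E x))"
    using Good_events Bad_events by (intro finite_measure_mono) auto
  also have "\<dots> \<le> prob Good + prob (\<Union>x\<in>set L. E x)"
    using Good_events Bad_events by (rule measure_Un_le)
  also have "prob Good \<le> (SUP t. prob (Zt Z M t))"
    by (auto simp: Good_def prob_le_SUP intro: cSUP_upper2[OF bdd_above_range_prob]
        split: option.split)
  also have "prob (\<Union>x\<in>set L. E x) \<le> real (card (set L)) * (SUP x. prob (E x))"
    using E_events by (intro prob_UN_le_card_mult_SUP) auto
  also have "\<dots> \<le> real q * (SUP x. prob (E x))"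
  proof (rule mult_right_mono)
    show "real (card (set L)) \<le> real q"
      using card_length[of L] length_queries_le[of A "\<lambda>_. f" q "[]"] by (simp add: L_def)
    show "0 \<le> (SUP x. prob (E x))"
      by (rule order_trans[OF measure_nonneg prob_le_SUP])
  qed
  finally show ?thesis
    by simp
qed

theorem mainTheorem1:
  fixes \<mu> :: "('x \<Rightarrow> 'm::metric_space) measure"
    and Z :: "('x \<Rightarrow> 'm) \<Rightarrow> 't set"
    and A :: "('x, 'm, 't) algorithm"
    and \<tau> \<beta> :: real and q :: nat
    and f :: "'x \<Rightarrow> 'm"
  assumes "prob_space \<mu>"
    and "\<tau> > 0"
    and "\<And>t. Zt Z \<mu> t \<in> sets \<mu>"
    and "\<And>x. {s \<in> space \<mu>. dist (s x) (f x) > \<tau>} \<in> sets \<mu>"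
    and "{s \<in> space \<mu>. succeeds A Z \<tau> q s} \<in> sets \<mu>"
    and "learns_with_prob A Z \<tau> q \<mu> \<beta>"
  shows "real q \<ge> (\<beta> - (SUP t. measure \<mu> (Zt Z \<mu> t)))
                   / (SUP x. measure \<mu> {s \<in> space \<mu>. dist (s x) (f x) > \<tau>})"
proof -
  interpret prob_space \<mu> by fact
  define D where "D = (SUP x. prob {s \<in> space \<mu>. dist (s x) (f x) > \<tau>})"
  have "\<beta> \<le> prob {s \<in> space \<mu>. succeeds A Z \<tau> q s}"
    using \<open>learns_with_prob A Z \<tau> q \<mu> \<beta>\<close> by (simp add: learns_with_prob_def)
  also have "\<dots> \<le> (SUP t. prob (Zt Z \<mu> t)) + real q * D"
    unfolding D_def using assms(1-4) by (intro prob_succeeds_le) auto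
  finally have "\<beta> - (SUP t. prob (Zt Z \<mu> t)) \<le> real q * D"
    by simp
  moreover have "0 \<le> D"
    unfolding D_def by (rule order_trans[OF measure_nonneg prob_le_SUP])
  ultimately show ?thesis
    unfolding D_def[symmetric] by (cases "D = 0") (auto simp: divide_le_eq)
qed

end
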